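(* Let $A,B$ be Pareto sets of size $n$ each, sorted lexicographically, and let $k$ be the size of their Pareto sum. The (heap-based) Sort \& Compare algorithm computes the Pareto sum of $A$ and $B$ in $\mathcal{O}(n^2\log n)$ time using $\mathcal{O}(n+k)$ space.
   Context: For $p,p'\in\mathbb{R}^2$, $p$ dominates $p'$ if $p\neq p'$, $p.x\le p'.x$ and $p.y\le p'.y$. A Pareto set is a set $S\subset\mathbb{R}^2$ in which no point dominates another; $S_i$ denotes the element of rank $i$ in lexicographic order. The Minkowski matrix is $M_{ij}=A_i+B_j$; each column is a lexicographically sorted Pareto set. The Pareto sum $C$ is the set of entries of $M$ not dominated by any entry of $M$. The Sort \& Compare algorithm: initialize a min-heap (lexicographic order) with the first row $M_{11},\dots,M_{1n}$, each element remembering its matrix position. Repeatedly extract the minimum $M_{ij}$; if $C$ is empty or $M_{ij}$ is neither dominated by nor equal to the last element added to $C$, append $M_{ij}$ to $C$; then, if $i<n$, insert $M_{i+1,j}$ into the heap. Stop when the heap is empty. *)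

theory Defs
  imports Complex_Main "HOL-Library.Multiset" "HOL-Library.Product_Lexorder"
begin

text \<open>Points of the plane are pairs of reals. The import Product_Lexorder makes
  the order on pairs (and on triples (point, i, j)) the lexicographic order.\<close>

type_synonym point = "real \<times> real"

definition dominates :: "point \<Rightarrow> point \<Rightarrow> bool" where
  "dominates p q \<longleftrightarrow> p \<noteq> q \<and> fst p \<le> fst q \<and> snd p \<le> snd q"

definition pareto_set :: "point set \<Rightarrow> bool" where
  "pareto_set S \<longleftrightarrow> (\<forall>p\<in>S. \<forall>q\<in>S. \<not> dominates p q)"

text \<open>A Pareto set given as the list of its elements in lexicographic order
  (index 0 is rank 1).\<close>
definition sorted_pareto_list :: "point list \<Rightarrow> bool" where
  "sorted_pareto_list xs \<longleftrightarrow> sorted_wrt (<) xs \<and> pareto_set (set xs)"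

definition padd :: "point \<Rightarrow> point \<Rightarrow> point" where
  "padd p q = (fst p + fst q, snd p + snd q)"

definition mink :: "point list \<Rightarrow> point list \<Rightarrow> nat \<Rightarrow> nat \<Rightarrow> point" where
  "mink A B i j = padd (A ! i) (B ! j)"

definition entries :: "point list \<Rightarrow> point list \<Rightarrow> point set" where
  "entries A B = {mink A B i j | i j. i < length A \<and> j < length B}"

definition pareto_sum :: "point list \<Rightarrow> point list \<Rightarrow> point set" where
  "pareto_sum A B = {p \<in> entries A B. \<not> (\<exists>q\<in>entries A B. dominates q p)}"

type_synonym heap = "(point \<times> nat \<times> nat) multiset"
type_synonym state = "heap \<times> point list"

definition sc_init :: "point list \<Rightarrow> point list \<Rightarrow> state" where
  "sc_init A B = (mset (map (\<lambda>j. (mink A B 0 j, 0, j)) [0..<length B]), [])"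

text \<open>One iteration: extract the (lexicographic) minimum, possibly append it to C,
  insert the entry below it. A heap-min tie between equal points is broken by position.\<close>
definition sc_step :: "point list \<Rightarrow> point list \<Rightarrow> state \<Rightarrow> state" where
  "sc_step A B s = (let (H, C) = s in
     if H = {#} then (H, C) else
     (let x = Min (set_mset H); p = fst x; i = fst (snd x); j = snd (snd x);
          H' = H - {#x#};
          C' = (if C = [] \<or> (\<not> dominates (last C) p \<and> last C \<noteq> p) then C @ [p] else C);
          H'' = (if Suc i < length A then add_mset (mink A B (Suc i) j, Suc i, j) H' else H')
      in (H'', C')))"

definition sc_state :: "point list \<Rightarrow> point list \<Rightarrow> nat \<Rightarrow> state" where
  "sc_state A B t = (sc_step A B ^^ t) (sc_init A B)"

definition sc_iters :: "point list \<Rightarrow> point list \<Rightarrow> nat" where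
  "sc_iters A B = (LEAST t. fst (sc_state A B t) = {#})"

definition sc_output :: "point list \<Rightarrow> point list \<Rightarrow> point list" where
  "sc_output A B = snd (sc_state A B (sc_iters A B))"

text \<open>Cost model: a binary-heap operation (insert / extract-min) on a heap with
  s elements costs 1 + log2(s+1); comparisons and list appends cost O(1).\<close>
definition heap_op_cost :: "nat \<Rightarrow> real" where
  "heap_op_cost s = 1 + log 2 (real s + 1)"

definition step_cost :: "state \<Rightarrow> real" where
  "step_cost s = (if fst s = {#} then 1
     else heap_op_cost (size (fst s)) + 1 + heap_op_cost (size (fst s)))"

definition sc_time :: "point list \<Rightarrow> point list \<Rightarrow> real" where
  "sc_time A B = (\<Sum>j<length B. heap_op_cost j)
     + (\<Sum>t<sc_iters A B. step_cost (sc_state A B t))"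

definition state_space :: "state \<Rightarrow> nat" where
  "state_space s = size (fst s) + length (snd s)"

definition sc_space :: "point list \<Rightarrow> point list \<Rightarrow> nat" where
  "sc_space A B = Max ((\<lambda>t. state_space (sc_state A B t)) ` {0..sc_iters A B})"

end

theory Submission
  imports Defs
begin

text \<open>Let f j be the number of entries of column j of the Minkowski matrix that have
  been extracted so far. Columns are lexicographically increasing, so the heap always
  holds the topmost unextracted entry of every column, every extracted entry is
  lexicographically below every heap entry, and extraction visits the n^2 entries in
  lexicographic order. Along that order a point is dominated by an earlier one iff its
  y-coordinate is not below the smallest y-coordinate seen so far, which is the
  y-coordinate of the last point of C; hence C grows as the staircase of the Pareto
  front of the extracted entries and ends as the Pareto sum. Each of the n^2
  iterations performs two operations on a heap of at most n elements, costing
  O(log n), and the space is bounded by the heap size n plus the length of C.\<close>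

definition pareto_front :: "point set \<Rightarrow> point set" where
  "pareto_front S = {p \<in> S. \<not> (\<exists>q\<in>S. dominates q p)}"

lemma not_dominates_if_lex_le: "(q::point) \<le> p \<Longrightarrow> \<not> dominates p q"
  by (cases p; cases q) (auto simp: dominates_def)

subsection \<open>The compare step\<close>

definition append_undominated :: "point list \<Rightarrow> point \<Rightarrow> point list" where
  "append_undominated C p =
     (if C = [] \<or> (\<not> dominates (last C) p \<and> last C \<noteq> p) then C @ [p] else C)"

definition staircase_of :: "point list \<Rightarrow> point set \<Rightarrow> bool" where
  "staircase_of C P \<longleftrightarrow> sorted_wrt (<) C \<and> set C = pareto_front P \<and>
     (C = [] \<longleftrightarrow> P = {}) \<and> (C \<noteq> [] \<longrightarrow> (\<forall>q\<in>P. snd (last C) \<le> snd q))"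

lemma staircase_of_empty: "staircase_of [] {}"
  by (simp add: staircase_of_def pareto_front_def)

lemma staircase_of_insert_lex_max:
  assumes C: "staircase_of C P" and p_max: "\<forall>q\<in>P. q \<le> p"
  shows "staircase_of (append_undominated C p) (insert p P)"
proof (cases "C = []")
  case True
  with C have "P = {}" by (simp add: staircase_of_def)
  with True show ?thesis
    by (auto simp: staircase_of_def append_undominated_def pareto_front_def dominates_def)
next
  case False
  define m where "m = last C"
  have sorted: "sorted_wrt (<) C" and setC: "set C = pareto_front P"
    and m_lowest: "\<forall>q\<in>P. snd m \<le> snd q"
    using C False by (auto simp: staircase_of_def m_def)
  have mP: "m \<in> P" using False setC by (auto simp: m_def pareto_front_def)
  have p_undominated: "\<forall>q\<in>P. \<not> dominates p q" using p_max not_dominates_if_lex_le by blast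
  show ?thesis
  proof (cases "dominates m p \<or> m = p")
    case True
    then have "append_undominated C p = C"
      using False by (auto simp: append_undominated_def m_def)
    moreover have "pareto_front (insert p P) = pareto_front P"
      using True mP p_undominated by (auto simp: pareto_front_def insert_absorb)
    moreover have "snd m \<le> snd p" using True by (auto simp: dominates_def)
    ultimately show ?thesis
      using C False m_lowest by (simp add: staircase_of_def m_def)
  next
    case undominated: False
    then have appended: "append_undominated C p = C @ [p]"
      by (simp add: append_undominated_def m_def)
    have "m < p" using p_max mP undominated by auto
    with undominated have p_lowest: "snd p < snd m"
      by (cases m; cases p) (auto simp: dominates_def)
    then have "p \<notin> P" using m_lowest by force
    then have "sorted_wrt (<) (C @ [p])"
      using sorted setC p_max by (auto simp: sorted_wrt_append pareto_front_def order.order_iff_strict)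
    moreover have "set (C @ [p]) = pareto_front (insert p P)"
      using setC p_undominated p_lowest m_lowest by (force simp: pareto_front_def dominates_def)
    moreover have "\<forall>q\<in>insert p P. snd p \<le> snd q"
      using p_lowest m_lowest by force
    ultimately show ?thesis by (simp add: staircase_of_def appended)
  qed
qed

subsection \<open>The heap as the frontier of the extracted entries\<close>

definition live_columns :: "point list \<Rightarrow> point list \<Rightarrow> (nat \<Rightarrow> nat) \<Rightarrow> nat set" where
  "live_columns A B f = {j. j < length B \<and> f j < length A}"

definition frontier_entry ::
    "point list \<Rightarrow> point list \<Rightarrow> (nat \<Rightarrow> nat) \<Rightarrow> nat \<Rightarrow> point \<times> nat \<times> nat" where
  "frontier_entry A B f j = (mink A B (f j) j, f j, j)"

definition frontier_heap :: "point list \<Rightarrow> point list \<Rightarrow> (nat \<Rightarrow> nat) \<Rightarrow> heap" where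
  "frontier_heap A B f = image_mset (frontier_entry A B f) (mset_set (live_columns A B f))"

definition extracted :: "point list \<Rightarrow> point list \<Rightarrow> (nat \<Rightarrow> nat) \<Rightarrow> point set" where
  "extracted A B f = {mink A B i j | i j. j < length B \<and> i < f j}"

lemma finite_live_columns: "finite (live_columns A B f)"
  by (simp add: live_columns_def)

lemma size_frontier_heap: "size (frontier_heap A B f) \<le> length B"
proof -
  have "size (frontier_heap A B f) = card (live_columns A B f)"
    by (simp add: frontier_heap_def)
  also have "\<dots> \<le> card {..<length B}"
    by (rule card_mono) (auto simp: live_columns_def)
  finally show ?thesis by simp
qed

lemma frontier_heap_empty_iff: "frontier_heap A B f = {#} \<longleftrightarrow> live_columns A B f = {}"
  by (simp add: frontier_heap_def finite_live_columns mset_set_empty_iff)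

lemma frontier_heap_Min:
  assumes "frontier_heap A B f \<noteq> {#}"
  obtains j where "j \<in> live_columns A B f"
    and "Min (set_mset (frontier_heap A B f)) = frontier_entry A B f j"
    and "\<forall>k\<in>live_columns A B f. mink A B (f j) j \<le> mink A B (f k) k"
proof -
  have set_heap: "set_mset (frontier_heap A B f) = frontier_entry A B f ` live_columns A B f"
    by (simp add: frontier_heap_def finite_live_columns)
  have "Min (set_mset (frontier_heap A B f)) \<in> set_mset (frontier_heap A B f)"
    using assms by simp
  then obtain j where j: "j \<in> live_columns A B f"
    and Min: "Min (set_mset (frontier_heap A B f)) = frontier_entry A B f j"
    using set_heap by auto
  have "mink A B (f j) j \<le> mink A B (f k) k" if "k \<in> live_columns A B f" for k
  proof -
    have "frontier_entry A B f j \<le> frontier_entry A B f k"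
      using Min that set_heap by (metis Min_le finite_imageI finite_live_columns imageI)
    then show ?thesis
      unfolding frontier_entry_def by (subst (asm) less_eq_prod_def) (auto intro: less_imp_le)
  qed
  with j Min that show ?thesis by blast
qed

lemma frontier_heap_advance:
  assumes "j \<in> live_columns A B f"
  shows "frontier_heap A B (f(j := Suc (f j))) =
    (if Suc (f j) < length A
     then add_mset (mink A B (Suc (f j)) j, Suc (f j), j)
            (frontier_heap A B f - {#frontier_entry A B f j#})
     else frontier_heap A B f - {#frontier_entry A B f j#})"
proof -
  define f' where "f' = f(j := Suc (f j))"
  have "frontier_heap A B f - {#frontier_entry A B f j#}
        = image_mset (frontier_entry A B f) (mset_set (live_columns A B f - {j}))"
    using assms by (simp add: frontier_heap_def finite_live_columns mset_set.remove)
  also have "\<dots> = image_mset (frontier_entry A B f') (mset_set (live_columns A B f - {j}))"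
    by (rule image_mset_cong) (auto simp: frontier_entry_def f'_def finite_live_columns)
  finally have removed: "frontier_heap A B f - {#frontier_entry A B f j#} = \<dots>" .
  show ?thesis
  proof (cases "Suc (f j) < length A")
    case True
    then have "live_columns A B f' = insert j (live_columns A B f - {j})"
      using assms by (auto simp: live_columns_def f'_def)
    moreover have "mset_set (insert j (live_columns A B f - {j}))
        = add_mset j (mset_set (live_columns A B f - {j}))"
      by (rule mset_set.insert) (auto simp: finite_live_columns)
    ultimately show ?thesis
      using True removed by (simp add: frontier_heap_def f'_def frontier_entry_def)
  next
    case False
    then have "live_columns A B f' = live_columns A B f - {j}"
      using assms by (auto simp: live_columns_def f'_def)
    then show ?thesis using False removed by (simp add: frontier_heap_def f'_def)
  qed
qed

lemma extracted_advance:
  "j < length B \<Longrightarrow> extracted A B (f(j := Suc (f j))) = insert (mink A B (f j) j) (extracted A B f)"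
  by (auto simp: extracted_def less_Suc_eq)

lemma extracted_all: "\<forall>j<length B. f j = length A \<Longrightarrow> extracted A B f = entries A B"
  unfolding extracted_def entries_def by metis

lemma live_columns_empty_iff_sum:
  assumes "\<forall>j<length B. f j \<le> length A"
  shows "live_columns A B f = {} \<longleftrightarrow> (\<Sum>j<length B. f j) = length A * length B"
proof
  assume "live_columns A B f = {}"
  then have "\<forall>j<length B. f j = length A" using assms by (force simp: live_columns_def)
  then show "(\<Sum>j<length B. f j) = length A * length B" by simp
next
  assume sum: "(\<Sum>j<length B. f j) = length A * length B"
  show "live_columns A B f = {}"
  proof (rule ccontr)
    assume "live_columns A B f \<noteq> {}"
    then have "\<exists>j\<in>{..<length B}. f j < length A" by (auto simp: live_columns_def)
    then have "(\<Sum>j<length B. f j) < (\<Sum>j<length B. length A)"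
      using assms by (intro sum_strict_mono_ex1) auto
    with sum show False by simp
  qed
qed

lemma sum_lessThan_advance:
  fixes f :: "nat \<Rightarrow> nat"
  assumes "j < n"
  shows "(\<Sum>k<n. (f(j := Suc (f j))) k) = Suc (\<Sum>k<n. f k)"
proof -
  have "(\<Sum>k<n. (f(j := Suc (f j))) k) = (\<Sum>k<n. f k + (if k = j then 1 else 0))"
    by (rule sum.cong) auto
  also have "\<dots> = (\<Sum>k<n. f k) + 1" using assms by (simp add: sum.distrib)
  finally show ?thesis by simp
qed

lemma column_strict_mono:
  assumes "sorted_wrt (<) A" "i < i'" "i' < length A"
  shows "mink A B i j < mink A B i' j"
proof -
  have "A ! i < A ! i'" using assms sorted_wrt_nth_less by blast
  then show ?thesis
    by (cases "A ! i"; cases "A ! i'") (auto simp: mink_def padd_def)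
qed

subsection \<open>The loop invariant\<close>

definition sc_invariant :: "point list \<Rightarrow> point list \<Rightarrow> (nat \<Rightarrow> nat) \<Rightarrow> state \<Rightarrow> bool" where
  "sc_invariant A B f s \<longleftrightarrow> (\<forall>j<length B. f j \<le> length A) \<and>
     fst s = frontier_heap A B f \<and> staircase_of (snd s) (extracted A B f) \<and>
     (\<forall>j\<in>live_columns A B f. \<forall>q\<in>extracted A B f. q \<le> mink A B (f j) j)"

lemma sc_invariant_init:
  assumes "A \<noteq> []"
  shows "sc_invariant A B (\<lambda>_. 0) (sc_init A B)"
proof -
  have "live_columns A B (\<lambda>_. 0) = {..<length B}"
    using assms by (auto simp: live_columns_def)
  moreover have "frontier_entry A B (\<lambda>_. 0) = (\<lambda>j. (mink A B 0 j, 0, j))"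
    by (rule ext) (simp add: frontier_entry_def)
  ultimately have "fst (sc_init A B) = frontier_heap A B (\<lambda>_. 0)"
    by (simp add: sc_init_def frontier_heap_def frontier_entry_def mset_set_upto_eq_mset_upto)
  moreover have "extracted A B (\<lambda>_. 0) = {}" by (simp add: extracted_def)
  ultimately show ?thesis
    by (simp add: sc_invariant_def sc_init_def staircase_of_empty)
qed

lemma sc_step_Min:
  assumes "H \<noteq> {#}" "Min (set_mset H) = (p, i, j)"
  shows "sc_step A B (H, C) =
    (if Suc i < length A then add_mset (mink A B (Suc i) j, Suc i, j) (H - {#(p, i, j)#})
     else H - {#(p, i, j)#}, append_undominated C p)"
  using assms by (simp add: sc_step_def append_undominated_def Let_def)

lemma sc_invariant_step:
  assumes inv: "sc_invariant A B f s" and nonempty: "fst s \<noteq> {#}" and A: "sorted_wrt (<) A"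
  shows "\<exists>j\<in>live_columns A B f. sc_invariant A B (f(j := Suc (f j))) (sc_step A B s)"
proof -
  obtain H C where s: "s = (H, C)" by fastforce
  have H: "H = frontier_heap A B f" and C: "staircase_of C (extracted A B f)"
    and bounded: "\<forall>j<length B. f j \<le> length A"
    and below: "\<forall>j\<in>live_columns A B f. \<forall>q\<in>extracted A B f. q \<le> mink A B (f j) j"
    using inv s by (auto simp: sc_invariant_def)
  have "frontier_heap A B f \<noteq> {#}" using nonempty s H by simp
  then obtain j where j: "j \<in> live_columns A B f"
    and Min: "Min (set_mset (frontier_heap A B f)) = frontier_entry A B f j"
    and least: "\<forall>k\<in>live_columns A B f. mink A B (f j) j \<le> mink A B (f k) k"
    by (rule frontier_heap_Min)
  define p where "p = mink A B (f j) j"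
  define f' where "f' = f(j := Suc (f j))"
  have j_bounds: "j < length B" "f j < length A" using j by (auto simp: live_columns_def)
  have step: "sc_step A B s = (frontier_heap A B f', append_undominated C p)"
    using sc_step_Min[of H p "f j" j A B C] Min nonempty s H frontier_heap_advance[OF j]
    by (simp add: frontier_entry_def p_def f'_def)
  have extracted': "extracted A B f' = insert p (extracted A B f)"
    using extracted_advance j_bounds by (simp add: p_def f'_def)
  have p_max: "\<forall>q\<in>extracted A B f. q \<le> p" using below j by (simp add: p_def)
  have "p \<le> mink A B (f' k) k" if "k \<in> live_columns A B f'" for k
  proof (cases "k = j")
    case True
    with that have "Suc (f j) < length A" by (simp add: live_columns_def f'_def)
    with True A show ?thesis
      by (auto simp: p_def f'_def intro: less_imp_le column_strict_mono)
  next
    case False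
    with that have "k \<in> live_columns A B f" by (simp add: live_columns_def f'_def)
    with False least show ?thesis by (simp add: p_def f'_def)
  qed
  then have "\<forall>k\<in>live_columns A B f'. \<forall>q\<in>extracted A B f'. q \<le> mink A B (f' k) k"
    using p_max extracted' by (fastforce intro: order_trans)
  moreover have "staircase_of (append_undominated C p) (extracted A B f')"
    using staircase_of_insert_lex_max[OF C p_max] extracted' by simp
  moreover have "\<forall>k<length B. f' k \<le> length A" using bounded j_bounds by (simp add: f'_def)
  ultimately have "sc_invariant A B f' (sc_step A B s)" using step by (simp add: sc_invariant_def)
  with j show ?thesis unfolding f'_def by blast
qed

lemma sc_state_Suc: "sc_state A B (Suc t) = sc_step A B (sc_state A B t)"
  by (simp add: sc_state_def)

lemma sc_state_invariant:
  assumes A: "A \<noteq> []" "sorted_wrt (<) A" and "t \<le> length A * length B"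
  shows "\<exists>f. sc_invariant A B f (sc_state A B t) \<and> (\<Sum>j<length B. f j) = t"
  using assms(3)
proof (induction t)
  case 0
  show ?case using sc_invariant_init[OF A(1)] by (auto simp: sc_state_def)
next
  case (Suc t)
  then obtain f where inv: "sc_invariant A B f (sc_state A B t)"
    and sum: "(\<Sum>j<length B. f j) = t"
    by auto
  have "live_columns A B f \<noteq> {}"
    using live_columns_empty_iff_sum[of B f A] inv sum Suc.prems by (simp add: sc_invariant_def)
  then have "fst (sc_state A B t) \<noteq> {#}"
    using inv frontier_heap_empty_iff by (simp add: sc_invariant_def)
  then obtain j where "j \<in> live_columns A B f"
    and "sc_invariant A B (f(j := Suc (f j))) (sc_state A B (Suc t))"
    using sc_invariant_step[OF inv _ A(2)] by (auto simp: sc_state_Suc)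
  then show ?case
    using sum sum_lessThan_advance[of j "length B" f] by (auto simp: live_columns_def)
qed

lemma sc_state_heap_empty_iff:
  assumes "A \<noteq> []" "sorted_wrt (<) A" "t \<le> length A * length B"
  shows "fst (sc_state A B t) = {#} \<longleftrightarrow> t = length A * length B"
proof -
  obtain f where "sc_invariant A B f (sc_state A B t)" "(\<Sum>j<length B. f j) = t"
    using sc_state_invariant[OF assms] by blast
  then show ?thesis
    using live_columns_empty_iff_sum[of B f A] frontier_heap_empty_iff
    by (simp add: sc_invariant_def)
qed

lemma sc_iters_eq:
  assumes "A \<noteq> []" "sorted_wrt (<) A"
  shows "sc_iters A B = length A * length B"
  unfolding sc_iters_def
proof (rule Least_equality)
  show "fst (sc_state A B (length A * length B)) = {#}"
    using sc_state_heap_empty_iff[OF assms] by simp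
next
  fix t assume "fst (sc_state A B t) = {#}"
  then show "length A * length B \<le> t"
    using sc_state_heap_empty_iff[OF assms, of t] by (cases "t \<le> length A * length B") auto
qed

lemma sc_output_staircase:
  assumes "A \<noteq> []" "sorted_wrt (<) A"
  shows "staircase_of (sc_output A B) (entries A B)"
proof -
  obtain f where inv: "sc_invariant A B f (sc_state A B (length A * length B))"
    and sum: "(\<Sum>j<length B. f j) = length A * length B"
    using sc_state_invariant[OF assms order_refl] by blast
  then have "live_columns A B f = {}"
    using live_columns_empty_iff_sum[of B f A] by (simp add: sc_invariant_def)
  with inv have "\<forall>j<length B. f j = length A"
    by (force simp: sc_invariant_def live_columns_def)
  with inv show ?thesis
    by (simp add: sc_output_def sc_iters_eq[OF assms] sc_invariant_def extracted_all)
qed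

lemma sc_output_set:
  assumes "A \<noteq> []" "sorted_wrt (<) A"
  shows "set (sc_output A B) = pareto_sum A B"
  using sc_output_staircase[OF assms]
  by (simp add: staircase_of_def pareto_front_def pareto_sum_def)

lemma length_sc_output:
  assumes "A \<noteq> []" "sorted_wrt (<) A"
  shows "length (sc_output A B) = card (pareto_sum A B)"
  using sc_output_staircase[OF assms] sc_output_set[OF assms]
  by (metis distinct_card staircase_of_def strict_sorted_iff)

lemma size_sc_state_heap:
  assumes "A \<noteq> []" "sorted_wrt (<) A" "t \<le> sc_iters A B"
  shows "size (fst (sc_state A B t)) \<le> length B"
proof -
  have "t \<le> length A * length B" using assms(3) by (simp add: sc_iters_eq[OF assms(1,2)])
  then obtain f where "sc_invariant A B f (sc_state A B t)"
    using sc_state_invariant[OF assms(1,2)] by blast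
  then show ?thesis using size_frontier_heap by (simp add: sc_invariant_def)
qed

lemma length_sc_state_output_mono:
  "t \<le> t' \<Longrightarrow> length (snd (sc_state A B t)) \<le> length (snd (sc_state A B t'))"
proof (induction t' rule: dec_induct)
  case (step t')
  have "length (snd (sc_state A B t')) \<le> length (snd (sc_state A B (Suc t')))"
    by (cases "sc_state A B t'") (auto simp: sc_state_Suc sc_step_def Let_def)
  with step.IH show ?case by simp
qed simp

subsection \<open>Time and space\<close>

lemma sc_time_le:
  assumes "A \<noteq> []" "sorted_wrt (<) A"
  shows "sc_time A B \<le> real (Suc (length A) * length B) * (3 + 2 * log 2 (real (length B) + 1))"
proof -
  define L where "L = log 2 (real (length B) + 1)"
  have L: "0 \<le> L" by (simp add: L_def)
  have op_cost: "heap_op_cost s \<le> 1 + L" if "s \<le> length B" for s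
    using that by (simp add: heap_op_cost_def L_def)
  have "heap_op_cost j \<le> 3 + 2 * L" if "j \<in> {..<length B}" for j
    using op_cost[of j] that L by simp
  then have "(\<Sum>j<length B. heap_op_cost j) \<le> real (length B) * (3 + 2 * L)"
    using sum_bounded_above[of "{..<length B}" heap_op_cost "3 + 2 * L"] by simp
  moreover have "(\<Sum>t<sc_iters A B. step_cost (sc_state A B t))
      \<le> real (length A * length B) * (3 + 2 * L)"
  proof -
    have "step_cost (sc_state A B t) \<le> 3 + 2 * L" if "t < sc_iters A B" for t
      using op_cost[OF size_sc_state_heap[OF assms, of t]] that L
      by (simp add: step_cost_def)
    then show ?thesis
      using sum_bounded_above[of "{..<sc_iters A B}" _ "3 + 2 * L"] sc_iters_eq[OF assms] by force
  qed
  ultimately show ?thesis by (simp add: sc_time_def L_def algebra_simps)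
qed

lemma sc_space_le:
  assumes "A \<noteq> []" "sorted_wrt (<) A"
  shows "sc_space A B \<le> length B + card (pareto_sum A B)"
  unfolding sc_space_def
proof (rule Max.boundedI)
  fix s assume "s \<in> (\<lambda>t. state_space (sc_state A B t)) ` {0..sc_iters A B}"
  then obtain t where t: "t \<le> sc_iters A B" and s: "s = state_space (sc_state A B t)" by auto
  have "length (snd (sc_state A B t)) \<le> length (sc_output A B)"
    using length_sc_state_output_mono[OF t] by (simp add: sc_output_def)
  with size_sc_state_heap[OF assms t] length_sc_output[OF assms]
  show "s \<le> length B + card (pareto_sum A B)"
    by (simp add: s state_space_def)
qed auto

lemma quadratic_log_bound:
  assumes "n \<ge> 2"
  shows "real (Suc n * n) * (3 + 2 * log 2 (real n + 1)) \<le> 11 * real n ^ 2 * log 2 (real n)"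
proof -
  have n: "2 \<le> real n" using assms by simp
  have log_ge_1: "1 \<le> log 2 (real n)" using n by simp
  have "real n * 2 \<le> real n * real n" using n by (intro mult_left_mono) auto
  then have "real n + 1 \<le> real n ^ 2" using n unfolding power2_eq_square by linarith
  then have "log 2 (real n + 1) \<le> log 2 (real n ^ 2)" using n by simp
  also have "\<dots> = 2 * log 2 (real n)" using n by (simp add: log_nat_power)
  finally have "log 2 (real n + 1) \<le> 2 * log 2 (real n)" .
  then have log_factor: "3 + 2 * log 2 (real n + 1) \<le> 7 * log 2 (real n)" using log_ge_1 by linarith
  have "real n \<le> real n ^ 2 / 2" using n by (simp add: power2_eq_square)
  then have size_factor: "real (Suc n * n) \<le> 3 / 2 * real n ^ 2" by (simp add: power2_eq_square)
  have "real (Suc n * n) * (3 + 2 * log 2 (real n + 1))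
      \<le> (3 / 2 * real n ^ 2) * (7 * log 2 (real n))"
    using size_factor log_factor n by (intro mult_mono) auto
  also have "\<dots> \<le> 11 * real n ^ 2 * log 2 (real n)" using log_ge_1 by simp
  finally show ?thesis .
qed

theorem mainTheorem5:
  "\<exists>c::real. c > 0 \<and>
     (\<forall>(n::nat) A B. n \<ge> 2 \<longrightarrow> length A = n \<longrightarrow> length B = n \<longrightarrow>
        sorted_pareto_list A \<longrightarrow> sorted_pareto_list B \<longrightarrow>
        (\<exists>t. fst (sc_state A B t) = {#}) \<and>
        set (sc_output A B) = pareto_sum A B \<and>
        sc_time A B \<le> c * real n ^ 2 * log 2 (real n) \<and>
        real (sc_space A B) \<le> c * (real n + real (card (pareto_sum A B))))"
proof (rule exI[of _ 11], intro conjI allI impI)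
  fix n :: nat and A B :: "point list"
  assume n: "n \<ge> 2" and lengths: "length A = n" "length B = n" and "sorted_pareto_list A"
  then have A: "A \<noteq> []" "sorted_wrt (<) A" by (auto simp: sorted_pareto_list_def)
  show "\<exists>t. fst (sc_state A B t) = {#}"
    using sc_state_heap_empty_iff[OF A order_refl] by blast
  show "set (sc_output A B) = pareto_sum A B" by (rule sc_output_set[OF A])
  show "sc_time A B \<le> 11 * real n ^ 2 * log 2 (real n)"
    using sc_time_le[OF A, of B] quadratic_log_bound[OF n] lengths by simp
  show "real (sc_space A B) \<le> 11 * (real n + real (card (pareto_sum A B)))"
    using sc_space_le[OF A, of B] lengths by simp
qed simp

end
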